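(* Let $\lambda,\alpha,K,L,m>0$, $s>1/2$ and $\theta\in\Theta(K,L,s,m)$. Let $Q_\theta$ be the Markov kernel on $\mathbb{R}$ given by $Q_\theta(x,A)=\mathbb{P}(e^{-\alpha}x+W_0\in A)$, where $W_0=\sum_{k=1}^{N}Y_ke^{-\alpha U_k}$ with $N$ Poisson with mean $\lambda$, $(Y_k)$ i.i.d. with density $\theta$, $(U_k)$ i.i.d. uniform on $[0,1]$, all independent. Let $V(x)=1+|x|$, $\mu=e^{-\alpha}$ and $b=1+\lambda K^{1/(4+m)}-e^{-\alpha}$. Then for all $x\in\mathbb{R}$, $$Q_\theta V(x)\le\mu V(x)+b,$$ i.e. $Q_\theta$ satisfies the geometric drift condition $D(V,\mu,b)$.
   Context: $\Theta(K,L,s,m)$ is the set of probability densities $\theta$ on $\mathbb{R}$ with $\int|y|^{4+m}\theta(y)\,dy\le K$ and $\int(1+|u|^2)^s|\mathcal{F}\theta(u)|^2du\le L^2$, where $\mathcal{F}\theta(u)=\int\theta(y)e^{-\mathrm{i}yu}dy$. $Q_\theta V(x)=\int V(y)Q_\theta(x,dy)$. A Markov kernel $P$ satisfies $D(V,\mu,b)$ if $V:\mathbb{R}\to[1,\infty)$ is measurable, $(\mu,b)\in(0,1)\times\mathbb{R}_+$ and $PV\le\mu V+b$. ($Q_\theta$ is the transition kernel of the exponential shot-noise with intensity $\lambda$, decay rate $\alpha$ and mark density $\theta$, sampled at integer times.) *)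

theory Defs
  imports "HOL-Probability.Probability"
begin

definition fourier :: "(real \<Rightarrow> real) \<Rightarrow> real \<Rightarrow> complex" where
  "fourier \<theta> u = (LINT y|lborel. complex_of_real (\<theta> y) * cis (- (y * u)))"

definition Theta :: "real \<Rightarrow> real \<Rightarrow> real \<Rightarrow> real \<Rightarrow> (real \<Rightarrow> real) set" where
  "Theta K L s m = {\<theta>.
     \<theta> \<in> borel_measurable borel \<and> (\<forall>y. 0 \<le> \<theta> y) \<and>
     (\<integral>\<^sup>+ y. ennreal (\<theta> y) \<partial>lborel) = 1 \<and>
     (\<integral>\<^sup>+ y. ennreal (\<bar>y\<bar> powr (4 + m) * \<theta> y) \<partial>lborel) \<le> ennreal K \<and>
     (\<integral>\<^sup>+ u. ennreal ((1 + \<bar>u\<bar>\<^sup>2) powr s * (cmod (fourier \<theta> u))\<^sup>2) \<partial>lborel) \<le> ennreal (L\<^sup>2)}"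

definition mark_law :: "real \<Rightarrow> (real \<Rightarrow> real) \<Rightarrow> real measure" where
  "mark_law \<alpha> \<theta> =
     distr (density lborel \<theta> \<Otimes>\<^sub>M uniform_measure lborel {0..1}) borel
           (\<lambda>(y, u). y * exp (- \<alpha> * u))"

fun conv_pow :: "real measure \<Rightarrow> nat \<Rightarrow> real measure" where
  "conv_pow M 0 = return borel 0"
| "conv_pow M (Suc n) = convolution M (conv_pow M n)"

definition W0_law :: "real \<Rightarrow> real \<Rightarrow> (real \<Rightarrow> real) \<Rightarrow> real measure" where
  "W0_law lam \<alpha> \<theta> = measure_pmf (poisson_pmf lam) \<bind> (\<lambda>n. conv_pow (mark_law \<alpha> \<theta>) n)"

definition Q_kernel :: "real \<Rightarrow> real \<Rightarrow> (real \<Rightarrow> real) \<Rightarrow> real \<Rightarrow> real measure" where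
  "Q_kernel lam \<alpha> \<theta> x = distr (W0_law lam \<alpha> \<theta>) borel (\<lambda>w. exp (- \<alpha>) * x + w)"

definition kernel_apply :: "(real \<Rightarrow> real measure) \<Rightarrow> (real \<Rightarrow> real) \<Rightarrow> real \<Rightarrow> ennreal" where
  "kernel_apply Q V x = (\<integral>\<^sup>+ y. ennreal (V y) \<partial>Q x)"

definition drift_cond :: "(real \<Rightarrow> real measure) \<Rightarrow> (real \<Rightarrow> real) \<Rightarrow> real \<Rightarrow> real \<Rightarrow> bool" where
  "drift_cond Q V \<mu> b \<longleftrightarrow>
     V \<in> borel_measurable borel \<and> (\<forall>x. 1 \<le> V x) \<and> 0 < \<mu> \<and> \<mu> < 1 \<and> 0 \<le> b \<and>
     (\<forall>x. kernel_apply Q V x \<le> ennreal (\<mu> * V x + b))"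

end

theory Submission
  imports Defs
begin

text \<open>
  \<open>Q V(x) = E (1 + |exp(-\<alpha>) x + W\<^sub>0|) \<le> 1 + exp(-\<alpha>) |x| + E |W\<^sub>0|\<close>. Applying the
  triangle inequality summand by summand in the compound Poisson sum (Wald's identity) gives
  \<open>E |W\<^sub>0| \<le> \<lambda> E |Y exp(-\<alpha> U)| \<le> \<lambda> E |Y|\<close>, and \<open>E |Y| \<le> K powr (1/p)\<close> for \<open>p = 4 + m\<close>
  follows by integrating the pointwise Young inequality \<open>|y| \<le> c (|y|/c) powr p / p + c (1 - 1/p)\<close>
  at the scale \<open>c = K powr (1/p)\<close>.
\<close>

lemma Young_powr_affine_bound:
  fixes p c a :: real
  assumes p: "p > 1" and c: "c > 0" and a: "a \<ge> 0"
  shows "a \<le> c / (p * c powr p) * a powr p + c * (1 - 1/p)"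
proof -
  define q where "q = p / (p - 1)"
  have q: "q > 1" and pq: "1/p + 1/q = 1"
    using p by (simp_all add: q_def field_simps)
  have "a/c * 1 \<le> (a/c) powr p / p + 1 powr q / q"
    by (rule Youngs_inequality[OF p q pq]) (use a c in auto)
  also have "1 powr q / q = 1 - 1/p" using pq by simp
  also have "(a/c) powr p = a powr p / c powr p" using a c by (simp add: powr_divide)
  finally have "c * (a/c) \<le> c * (a powr p / c powr p / p + (1 - 1/p))"
    using c by (intro mult_left_mono) auto
  thus ?thesis using c by (simp add: field_simps)
qed

lemma nn_integral_abs_density_le_moment_root:
  fixes \<theta> :: "real \<Rightarrow> real" and p K :: real
  assumes [measurable]: "\<theta> \<in> borel_measurable borel" and nonneg: "\<And>y. 0 \<le> \<theta> y"
    and total: "(\<integral>\<^sup>+ y. ennreal (\<theta> y) \<partial>lborel) = 1"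
    and moment: "(\<integral>\<^sup>+ y. ennreal (\<bar>y\<bar> powr p * \<theta> y) \<partial>lborel) \<le> ennreal K"
    and p: "p > 1" and K: "K > 0"
  shows "(\<integral>\<^sup>+ y. ennreal (\<theta> y * \<bar>y\<bar>) \<partial>lborel) \<le> ennreal (K powr (1/p))"
proof -
  define c where "c = K powr (1/p)"
  define D where "D = c / (p * K)"
  define E where "E = c * (1 - 1/p)"
  have c: "c > 0" and "c powr p = K"
    using K p by (simp_all add: c_def powr_powr)
  hence D: "D \<ge> 0" and E: "E \<ge> 0" and DKE: "D * K + E = c"
    using K p by (simp_all add: D_def E_def field_simps)
  have pointwise: "ennreal (\<theta> y * \<bar>y\<bar>)
      \<le> ennreal D * ennreal (\<bar>y\<bar> powr p * \<theta> y) + ennreal E * ennreal (\<theta> y)" for y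
  proof -
    have "\<theta> y * \<bar>y\<bar> \<le> \<theta> y * (D * \<bar>y\<bar> powr p + E)"
      using Young_powr_affine_bound[OF p c, of "\<bar>y\<bar>"] \<open>c powr p = K\<close> nonneg[of y]
      by (intro mult_left_mono) (simp_all add: D_def E_def)
    thus ?thesis
      using D E nonneg[of y] by (simp add: algebra_simps flip: ennreal_plus ennreal_mult)
  qed
  have "(\<integral>\<^sup>+ y. ennreal (\<theta> y * \<bar>y\<bar>) \<partial>lborel)
      \<le> (\<integral>\<^sup>+ y. ennreal D * ennreal (\<bar>y\<bar> powr p * \<theta> y) + ennreal E * ennreal (\<theta> y) \<partial>lborel)"
    by (rule nn_integral_mono[OF pointwise])
  also have "\<dots> = ennreal D * (\<integral>\<^sup>+ y. ennreal (\<bar>y\<bar> powr p * \<theta> y) \<partial>lborel)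
        + ennreal E * (\<integral>\<^sup>+ y. ennreal (\<theta> y) \<partial>lborel)"
    by (simp add: nn_integral_add nn_integral_cmult)
  also have "\<dots> \<le> ennreal (D * K + E)"
    using moment total D E K
    by (simp add: ennreal_plus ennreal_mult mult_left_mono)
  finally show ?thesis by (simp add: DKE c_def)
qed

lemma Theta_D:
  assumes "\<theta> \<in> Theta K L s m"
  shows "\<theta> \<in> borel_measurable borel" "\<And>y. 0 \<le> \<theta> y"
    "(\<integral>\<^sup>+ y. ennreal (\<theta> y) \<partial>lborel) = 1"
    "(\<integral>\<^sup>+ y. ennreal (\<bar>y\<bar> powr (4 + m) * \<theta> y) \<partial>lborel) \<le> ennreal K"
  using assms by (auto simp: Theta_def)

lemma prob_space_density_lborel:
  fixes \<theta> :: "real \<Rightarrow> real"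
  assumes [measurable]: "\<theta> \<in> borel_measurable borel"
    and "(\<integral>\<^sup>+ y. ennreal (\<theta> y) \<partial>lborel) = 1"
  shows "prob_space (density lborel \<theta>)"
  by standard (use assms(2) in \<open>simp add: emeasure_density\<close>)

lemma prob_space_uniform_unit_interval: "prob_space (uniform_measure lborel {0..1::real})"
  by (rule prob_space_uniform_measure) auto

lemma sets_mark_law [simp, measurable_cong]: "sets (mark_law \<alpha> \<theta>) = sets borel"
  by (simp add: mark_law_def)

lemma prob_space_mark_law:
  assumes "prob_space (density lborel \<theta>)"
  shows "prob_space (mark_law \<alpha> \<theta>)"
proof -
  interpret D: prob_space "density lborel \<theta>" by fact
  interpret U: prob_space "uniform_measure lborel {0..1::real}"
    by (rule prob_space_uniform_unit_interval)
  interpret P: prob_space "density lborel \<theta> \<Otimes>\<^sub>M uniform_measure lborel {0..1::real}"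
    by (rule prob_space_pair) unfold_locales
  show ?thesis unfolding mark_law_def by (rule P.prob_space_distr) simp
qed

lemma nn_integral_abs_mark_law_le:
  fixes \<theta> :: "real \<Rightarrow> real"
  assumes [measurable]: "\<theta> \<in> borel_measurable borel" and nonneg: "\<And>y. 0 \<le> \<theta> y"
    and \<alpha>: "0 \<le> \<alpha>"
  shows "(\<integral>\<^sup>+ w. ennreal \<bar>w\<bar> \<partial>mark_law \<alpha> \<theta>) \<le> (\<integral>\<^sup>+ y. ennreal (\<theta> y * \<bar>y\<bar>) \<partial>lborel)"
proof -
  interpret U: prob_space "uniform_measure lborel {0..1::real}"
    by (rule prob_space_uniform_unit_interval)
  have damped: "(\<integral>\<^sup>+ u. ennreal \<bar>y * exp (- \<alpha> * u)\<bar> \<partial>uniform_measure lborel {0..1}) \<le> ennreal \<bar>y\<bar>"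
    for y :: real
  proof -
    have "AE u in uniform_measure lborel {0..1}. ennreal \<bar>y * exp (- \<alpha> * u)\<bar> \<le> ennreal \<bar>y\<bar>"
      using \<alpha> by (intro AE_uniform_measureI AE_I2 impI ennreal_leI)
        (auto simp: abs_mult mult_left_le)
    hence "(\<integral>\<^sup>+ u. ennreal \<bar>y * exp (- \<alpha> * u)\<bar> \<partial>uniform_measure lborel {0..1})
        \<le> (\<integral>\<^sup>+ u. ennreal \<bar>y\<bar> \<partial>uniform_measure lborel {0..1::real})"
      by (rule nn_integral_mono_AE)
    thus ?thesis by (simp add: U.emeasure_space_1)
  qed
  have "(\<integral>\<^sup>+ w. ennreal \<bar>w\<bar> \<partial>mark_law \<alpha> \<theta>)
      = (\<integral>\<^sup>+ y. \<integral>\<^sup>+ u. ennreal \<bar>y * exp (- \<alpha> * u)\<bar> \<partial>uniform_measure lborel {0..1} \<partial>density lborel \<theta>)"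
    unfolding mark_law_def
    by (simp add: nn_integral_distr U.nn_integral_fst[symmetric] case_prod_beta)
  also have "\<dots> \<le> (\<integral>\<^sup>+ y. ennreal \<bar>y\<bar> \<partial>density lborel \<theta>)"
    by (intro nn_integral_mono damped)
  also have "\<dots> = (\<integral>\<^sup>+ y. ennreal (\<theta> y * \<bar>y\<bar>) \<partial>lborel)"
    using nonneg by (simp add: nn_integral_density ennreal_mult)
  finally show ?thesis .
qed

lemma sets_conv_pow [simp, measurable_cong]: "sets (conv_pow M n) = sets borel"
  by (cases n) simp_all

lemma prob_space_conv_pow:
  assumes M: "prob_space M" and [measurable_cong]: "sets M = sets borel"
  shows "prob_space (conv_pow M n)"
proof (induction n)
  case 0
  show ?case by (simp add: prob_space_return)
next
  case (Suc n)
  interpret M: prob_space M by (rule M)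
  interpret N: prob_space "conv_pow M n" by (rule Suc)
  interpret P: prob_space "M \<Otimes>\<^sub>M conv_pow M n"
    by (rule prob_space_pair) unfold_locales
  show ?case unfolding conv_pow.simps convolution_def
    by (rule P.prob_space_distr) measurable
qed

text \<open>The affine shift \<open>A\<close> is what makes the induction go through: peeling off the
  first summand \<open>x\<close> turns \<open>A + |x + y|\<close> into the instance \<open>A + |x|\<close> of the hypothesis.\<close>

lemma nn_integral_conv_pow_abs_le:
  assumes M: "prob_space M" and sets_M [measurable_cong]: "sets M = sets borel"
    and moment: "(\<integral>\<^sup>+ w. ennreal \<bar>w\<bar> \<partial>M) \<le> ennreal C" and C: "0 \<le> C"
    and A: "0 \<le> A"
  shows "(\<integral>\<^sup>+ w. ennreal (A + \<bar>w\<bar>) \<partial>conv_pow M n) \<le> ennreal (A + real n * C)"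
  using A
proof (induction n arbitrary: A)
  case 0
  thus ?case by (simp add: nn_integral_return)
next
  case (Suc n)
  interpret M: prob_space M by (rule M)
  interpret N: prob_space "conv_pow M n" by (rule prob_space_conv_pow[OF M sets_M])
  have "(\<integral>\<^sup>+ w. ennreal (A + \<bar>w\<bar>) \<partial>conv_pow M (Suc n))
      = (\<integral>\<^sup>+ x. \<integral>\<^sup>+ y. ennreal (A + \<bar>x + y\<bar>) \<partial>conv_pow M n \<partial>M)"
    unfolding conv_pow.simps
    by (rule nn_integral_convolution) (simp_all add: sets_M M.finite_measure_axioms N.finite_measure_axioms)
  also have "\<dots> \<le> (\<integral>\<^sup>+ x. \<integral>\<^sup>+ y. ennreal ((A + \<bar>x\<bar>) + \<bar>y\<bar>) \<partial>conv_pow M n \<partial>M)"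
    by (intro nn_integral_mono ennreal_leI) (simp add: abs_triangle_ineq)
  also have "\<dots> \<le> (\<integral>\<^sup>+ x. ennreal (A + real n * C) + ennreal \<bar>x\<bar> \<partial>M)"
  proof (intro nn_integral_mono order.trans[OF Suc.IH])
    fix x :: real
    show "ennreal ((A + \<bar>x\<bar>) + real n * C) \<le> ennreal (A + real n * C) + ennreal \<bar>x\<bar>"
    proof -
      have "ennreal ((A + real n * C) + \<bar>x\<bar>) = ennreal (A + real n * C) + ennreal \<bar>x\<bar>"
        using Suc.prems C by (intro ennreal_plus) simp_all
      thus ?thesis by (simp add: add_ac)
    qed
  qed (use Suc.prems in simp)
  also have "\<dots> = ennreal (A + real n * C) + (\<integral>\<^sup>+ x. ennreal \<bar>x\<bar> \<partial>M)"
    by (simp add: nn_integral_add M.emeasure_space_1)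
  also have "\<dots> \<le> ennreal (A + real n * C) + ennreal C"
    using moment by (rule add_left_mono)
  also have "\<dots> = ennreal (A + real (Suc n) * C)"
    using Suc.prems C by (simp add: algebra_simps flip: ennreal_plus)
  finally show ?case .
qed

lemma poisson_mean_sums:
  assumes lam: "0 < lam"
  shows "(\<lambda>n. real n * pmf (poisson_pmf lam) n) sums lam"
proof -
  have "(\<lambda>n. lam * (lam ^ n / fact n * exp (- lam))) sums (lam * (exp lam * exp (- lam)))"
    using exp_converges[of lam]
    by (intro sums_mult sums_mult2) (simp add: divide_inverse_commute scaleR_conv_of_real)
  moreover have "lam * (lam ^ n / fact n * exp (- lam))
      = real (Suc n) * pmf (poisson_pmf lam) (Suc n)" for n
    using lam by (simp add: fact_Suc divide_simps del: of_nat_Suc)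
  ultimately have "(\<lambda>n. real (Suc n) * pmf (poisson_pmf lam) (Suc n)) sums lam"
    by (simp add: mult_exp_exp del: of_nat_Suc)
  hence "(\<lambda>n. real n * pmf (poisson_pmf lam) n) sums (lam + real 0 * pmf (poisson_pmf lam) 0)"
    by (subst sums_Suc_iff[symmetric])
  thus ?thesis by simp
qed

lemma nn_integral_poisson_affine:
  assumes lam: "0 < lam" and A: "0 \<le> A" and C: "0 \<le> C"
  shows "(\<integral>\<^sup>+ n. ennreal (A + real n * C) \<partial>measure_pmf (poisson_pmf lam)) = ennreal (A + lam * C)"
proof -
  have "(\<integral>\<^sup>+ n. ennreal (real n) \<partial>measure_pmf (poisson_pmf lam))
      = (\<Sum>n. ennreal (real n * pmf (poisson_pmf lam) n))"
    by (simp add: nn_integral_measure_pmf nn_integral_count_space_nat mult.commute ennreal_mult)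
  also have "\<dots> = ennreal lam"
    by (rule suminf_ennreal_eq[OF _ poisson_mean_sums[OF lam]]) simp
  finally have mean: "(\<integral>\<^sup>+ n. ennreal (real n) \<partial>measure_pmf (poisson_pmf lam)) = ennreal lam" .
  have "(\<integral>\<^sup>+ n. ennreal (A + real n * C) \<partial>measure_pmf (poisson_pmf lam))
      = (\<integral>\<^sup>+ n. ennreal A + ennreal C * ennreal (real n) \<partial>measure_pmf (poisson_pmf lam))"
    using A C by (simp add: mult.commute ennreal_plus ennreal_mult)
  also have "\<dots> = ennreal A + ennreal C * ennreal lam"
    by (simp add: nn_integral_add nn_integral_cmult mean measure_pmf.emeasure_space_1)
  finally show ?thesis
    using A C lam by (simp add: mult.commute ennreal_plus ennreal_mult)
qed

lemma kernel_apply_Q_kernel_le: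
  assumes lam: "0 < lam" and mark: "prob_space (mark_law \<alpha> \<theta>)"
    and moment: "(\<integral>\<^sup>+ w. ennreal \<bar>w\<bar> \<partial>mark_law \<alpha> \<theta>) \<le> ennreal C" and C: "0 \<le> C"
  shows "kernel_apply (Q_kernel lam \<alpha> \<theta>) (\<lambda>x. 1 + \<bar>x\<bar>) x
    \<le> ennreal (exp (- \<alpha>) * (1 + \<bar>x\<bar>) + (1 + lam * C - exp (- \<alpha>)))"
proof -
  define A where "A = 1 + exp (- \<alpha>) * \<bar>x\<bar>"
  have A: "0 \<le> A" by (simp add: A_def)
  have conv_pow_subprob:
    "conv_pow (mark_law \<alpha> \<theta>) \<in> measurable (measure_pmf (poisson_pmf lam)) (subprob_algebra borel)"
    using prob_space_conv_pow[OF mark]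
    by (auto simp: space_subprob_algebra intro: prob_space_imp_subprob_space)
  have [measurable_cong]: "sets (W0_law lam \<alpha> \<theta>) = sets borel"
    unfolding W0_law_def using conv_pow_subprob by (simp add: sets_bind)
  have "kernel_apply (Q_kernel lam \<alpha> \<theta>) (\<lambda>x. 1 + \<bar>x\<bar>) x
      = (\<integral>\<^sup>+ w. ennreal (1 + \<bar>exp (- \<alpha>) * x + w\<bar>) \<partial>W0_law lam \<alpha> \<theta>)"
    unfolding kernel_apply_def Q_kernel_def by (simp add: nn_integral_distr)
  also have "\<dots> \<le> (\<integral>\<^sup>+ w. ennreal (A + \<bar>w\<bar>) \<partial>W0_law lam \<alpha> \<theta>)"
    by (intro nn_integral_mono ennreal_leI)
      (auto simp: A_def abs_mult intro: order.trans[OF abs_triangle_ineq])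
  also have "\<dots> = (\<integral>\<^sup>+ n. \<integral>\<^sup>+ w. ennreal (A + \<bar>w\<bar>) \<partial>conv_pow (mark_law \<alpha> \<theta>) n
                    \<partial>measure_pmf (poisson_pmf lam))"
    unfolding W0_law_def by (rule nn_integral_bind[OF _ conv_pow_subprob]) simp
  also have "\<dots> \<le> (\<integral>\<^sup>+ n. ennreal (A + real n * C) \<partial>measure_pmf (poisson_pmf lam))"
    by (intro nn_integral_mono nn_integral_conv_pow_abs_le[OF mark _ moment C A]) simp
  also have "\<dots> = ennreal (A + lam * C)"
    by (rule nn_integral_poisson_affine[OF lam A C])
  finally show ?thesis by (simp add: A_def algebra_simps)
qed

theorem mainTheorem5:
  fixes lam \<alpha> K L m s :: real and \<theta> :: "real \<Rightarrow> real"
  assumes "0 < lam" "0 < \<alpha>" "0 < K" "0 < L" "0 < m" "s > 1/2"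
    and "\<theta> \<in> Theta K L s m"
  shows "(\<forall>x. kernel_apply (Q_kernel lam \<alpha> \<theta>) (\<lambda>x. 1 + \<bar>x\<bar>) x
            \<le> ennreal (exp (- \<alpha>) * (1 + \<bar>x\<bar>) + (1 + lam * K powr (1 / (4 + m)) - exp (- \<alpha>))))
         \<and> drift_cond (Q_kernel lam \<alpha> \<theta>) (\<lambda>x. 1 + \<bar>x\<bar>) (exp (- \<alpha>))
              (1 + lam * K powr (1 / (4 + m)) - exp (- \<alpha>))"
proof -
  note \<theta> = Theta_D[OF assms(7)]
  have mark: "prob_space (mark_law \<alpha> \<theta>)"
    by (intro prob_space_mark_law prob_space_density_lborel \<theta>)
  have "(\<integral>\<^sup>+ w. ennreal \<bar>w\<bar> \<partial>mark_law \<alpha> \<theta>) \<le> (\<integral>\<^sup>+ y. ennreal (\<theta> y * \<bar>y\<bar>) \<partial>lborel)"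
    using assms(2) by (intro nn_integral_abs_mark_law_le \<theta>(1,2)) simp
  also have "\<dots> \<le> ennreal (K powr (1 / (4 + m)))"
    using assms(3,5) by (intro nn_integral_abs_density_le_moment_root \<theta>) simp_all
  finally have moment: "(\<integral>\<^sup>+ w. ennreal \<bar>w\<bar> \<partial>mark_law \<alpha> \<theta>) \<le> ennreal (K powr (1 / (4 + m)))" .
  have drift: "\<forall>x. kernel_apply (Q_kernel lam \<alpha> \<theta>) (\<lambda>x. 1 + \<bar>x\<bar>) x
      \<le> ennreal (exp (- \<alpha>) * (1 + \<bar>x\<bar>) + (1 + lam * K powr (1 / (4 + m)) - exp (- \<alpha>)))"
    using kernel_apply_Q_kernel_le[OF assms(1) mark moment] by simp
  have "exp (- \<alpha>) < 1" using assms(2) by simp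
  moreover have "0 \<le> 1 + lam * K powr (1 / (4 + m)) - exp (- \<alpha>)"
    using calculation assms(1) by (smt (verit) mult_nonneg_nonneg powr_ge_zero)
  ultimately show ?thesis using drift by (simp add: drift_cond_def)
qed

end
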